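(* Let $G=(V,E)$ be a graph on $n$ vertices and $\epsilon>0$. Consider the algorithm that sets $V_1=V$, $E_1=E$ and for $i=1,\dots,n$: lets $w_i=(4/\epsilon)\sqrt{n/(n-i+1)}$, picks a vertex $v\in V_i$ with probability proportional to $d_{E_i}(v)+w_i$, outputs $v$, and sets $V_{i+1}=V_i\setminus\{v\}$ and $E_{i+1}=E_i$ minus all edges incident to $v$. From the resulting permutation of $V$, form the vertex cover consisting of, for each edge of $E$, its endpoint appearing earlier in the permutation, and let $\mathrm{ALG}(G)$ denote the size of this vertex cover. Then $$\mathbb{E}[\mathrm{ALG}(G)]\le\Big(2+2\cdot\tfrac1n\textstyle\sum_{i=1}^n w_i\Big)|\mathrm{OPT}(G)|\le(2+16/\epsilon)|\mathrm{OPT}(G)|.$$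
   Context: $d_{E_i}(v)$ is the number of edges of $E_i$ incident to $v$; $|\mathrm{OPT}(G)|$ is the size of a minimum vertex cover of $G$. *)

theory Defs
  imports "HOL-Probability.Probability"
begin

definition simple_graph :: "'a set \<Rightarrow> 'a set set \<Rightarrow> bool" where
  "simple_graph V E \<longleftrightarrow> finite V \<and> (\<forall>e\<in>E. e \<subseteq> V \<and> card e = 2)"

definition deg :: "'a set set \<Rightarrow> 'a \<Rightarrow> nat" where
  "deg Ec v = card {e\<in>Ec. v \<in> e}"

definition is_vertex_cover :: "'a set \<Rightarrow> 'a set set \<Rightarrow> 'a set \<Rightarrow> bool" where
  "is_vertex_cover V E C \<longleftrightarrow> C \<subseteq> V \<and> (\<forall>e\<in>E. e \<inter> C \<noteq> {})"

definition OPT :: "'a set \<Rightarrow> 'a set set \<Rightarrow> nat" where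
  "OPT V E = Min {card C | C. is_vertex_cover V E C}"

text \<open>Weight w_i at step i = n - card Vc + 1, so n - i + 1 = card Vc.\<close>
definition wt :: "real \<Rightarrow> nat \<Rightarrow> nat \<Rightarrow> real" where
  "wt eps n i = (4 / eps) * sqrt (real n / real (n - i + 1))"

definition pick :: "real \<Rightarrow> 'a set \<Rightarrow> 'a set set \<Rightarrow> 'a pmf" where
  "pick w Vc Ec = embed_pmf (\<lambda>v. if v \<in> Vc
       then (real (deg Ec v) + w) / (\<Sum>u\<in>Vc. real (deg Ec u) + w) else 0)"

text \<open>The random process, run for k steps starting from current vertex set Vc and
  edge set Ec; n is the number of vertices of the original graph.  Step index
  i = n - card Vc + 1.\<close>
fun perm_pmf :: "real \<Rightarrow> nat \<Rightarrow> nat \<Rightarrow> 'a set \<Rightarrow> 'a set set \<Rightarrow> 'a list pmf" where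
  "perm_pmf eps n 0 Vc Ec = return_pmf []"
| "perm_pmf eps n (Suc k) Vc Ec =
     bind_pmf (pick (wt eps n (n - card Vc + 1)) Vc Ec) (\<lambda>v.
       map_pmf (\<lambda>vs. v # vs) (perm_pmf eps n k (Vc - {v}) {e\<in>Ec. v \<notin> e}))"

definition alg_perm :: "real \<Rightarrow> 'a set \<Rightarrow> 'a set set \<Rightarrow> 'a list pmf" where
  "alg_perm eps V E = perm_pmf eps (card V) (card V) V E"

definition pos :: "'a list \<Rightarrow> 'a \<Rightarrow> nat" where
  "pos \<sigma> x = (LEAST i. i < length \<sigma> \<and> \<sigma> ! i = x)"

definition cover_of_perm :: "'a set set \<Rightarrow> 'a list \<Rightarrow> 'a set" where
  "cover_of_perm E \<sigma> = {x. \<exists>e\<in>E. x \<in> e \<and> (\<forall>y\<in>e. pos \<sigma> x \<le> pos \<sigma> y)}"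

definition ALG_expect :: "real \<Rightarrow> 'a set \<Rightarrow> 'a set set \<Rightarrow> real" where
  "ALG_expect eps V E =
     measure_pmf.expectation (alg_perm eps V E) (\<lambda>\<sigma>. real (card (cover_of_perm E \<sigma>)))"

end

theory Submission
  imports Defs
begin

text \<open>Fix a minimum vertex cover C. By induction on the number N of remaining vertices, the
  expected size of the cover produced on a residual graph with vertex set Vc is at most
  |Vc \<inter> C| * r(N), where r(N) = 2 + (1/N) * (w_1 + ... + w_N) and w_j is the weight used when
  j vertices remain. This is trivial if C contains at least half of Vc. Otherwise look at one
  step: every edge has an endpoint in C, so the degree sum outside C is at most the degree sum
  inside C. Hence the probability of picking a non-isolated vertex is at most (2 + w) times the
  probability of picking a vertex of C, which in turn is at least |Vc \<inter> C| / N. Together with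
  N r(N) = (N - 1) r(N - 1) + 2 + w and r(N - 1) \<ge> 2 + w (the weights grow as vertices
  disappear) this closes the induction. For N = n it gives the claimed bound even without the
  factor 2 in front of the average weight, and sum_j 1/sqrt j \<le> 2 sqrt n bounds that average
  by 8/eps.\<close>

lemma
  assumes "finite Vc" "Vc \<noteq> {}" "w > 0"
  shows pmf_pick: "pmf (pick w Vc Ec) v =
           (if v \<in> Vc then (real (deg Ec v) + w) / (\<Sum>u\<in>Vc. real (deg Ec u) + w) else 0)"
    and set_pmf_pick: "set_pmf (pick w Vc Ec) \<subseteq> Vc"
proof -
  define D where "D = (\<Sum>u\<in>Vc. real (deg Ec u) + w)"
  define f where "f = (\<lambda>v. if v \<in> Vc then (real (deg Ec v) + w) / D else 0)"
  have "D > 0"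
    unfolding D_def using assms by (intro sum_pos) (auto intro: add_nonneg_pos)
  then have f_nonneg: "\<And>x. 0 \<le> f x"
    unfolding f_def using assms(3) by auto
  have "(\<integral>\<^sup>+x. ennreal (f x) \<partial>count_space UNIV) = (\<Sum>x\<in>Vc. ennreal (f x))"
    by (rule nn_integral_count_space') (auto simp: assms(1) f_def)
  also have "\<dots> = ennreal (\<Sum>x\<in>Vc. f x)"
    using f_nonneg by (simp add: sum_ennreal)
  also have "(\<Sum>x\<in>Vc. f x) = 1"
    using \<open>D > 0\<close> by (simp add: f_def D_def flip: sum_divide_distrib)
  finally have f_prob: "(\<integral>\<^sup>+x. ennreal (f x) \<partial>count_space UNIV) = 1"
    by simp
  have pick_eq: "pick w Vc Ec = embed_pmf f"
    unfolding pick_def f_def D_def ..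
  show "pmf (pick w Vc Ec) v =
          (if v \<in> Vc then (real (deg Ec v) + w) / (\<Sum>u\<in>Vc. real (deg Ec u) + w) else 0)"
    unfolding pick_eq pmf_embed_pmf[OF f_nonneg f_prob] by (simp add: f_def D_def)
  show "set_pmf (pick w Vc Ec) \<subseteq> Vc"
    unfolding pick_eq set_embed_pmf[OF f_nonneg f_prob] by (auto simp: f_def)
qed

lemma wt_nonneg: "eps > 0 \<Longrightarrow> wt eps n i \<ge> 0"
  unfolding wt_def by simp

text \<open>wt eps n (n - N + 1) is the weight used in the step at which N vertices remain.\<close>

lemma wt_rev_eq:
  assumes "1 \<le> N" "N \<le> n"
  shows "wt eps n (n - N + 1) = 4 / eps * sqrt (real n / real N)"
  using assms by (simp add: wt_def)

lemma wt_rev_pos: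
  assumes "eps > 0" "1 \<le> N" "N \<le> n"
  shows "wt eps n (n - N + 1) > 0"
  using wt_rev_eq[OF assms(2,3), of eps] assms by simp

lemma wt_rev_antimono:
  assumes "eps > 0" "1 \<le> j" "j \<le> N" "N \<le> n"
  shows "wt eps n (n - N + 1) \<le> wt eps n (n - j + 1)"
proof -
  have "real n / real N \<le> real n / real j"
    using assms by (intro divide_left_mono) auto
  then have "4 / eps * sqrt (real n / real N) \<le> 4 / eps * sqrt (real n / real j)"
    using assms by (intro mult_left_mono) auto
  then show ?thesis
    using assms wt_rev_eq[of N n eps] wt_rev_eq[of j n eps] by simp
qed

lemma simple_graph_finite_edges: "simple_graph V E \<Longrightarrow> finite E"
  unfolding simple_graph_def by (meson Pow_iff finite_Pow_iff finite_subset subsetI)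

lemma simple_graph_remove_vertex:
  "simple_graph V E \<Longrightarrow> simple_graph (V - {v}) {e\<in>E. v \<notin> e}"
  unfolding simple_graph_def by auto

lemma perm_pmf_permutes:
  assumes "finite Vc" "card Vc \<le> n" "eps > 0"
    and "\<sigma> \<in> set_pmf (perm_pmf eps n (card Vc) Vc Ec)"
  shows "distinct \<sigma> \<and> set \<sigma> = Vc"
  using assms
proof (induction "card Vc" arbitrary: Vc Ec \<sigma>)
  case 0
  have "Vc = {}" "\<sigma> = []"
    using 0 by (simp, simp flip: 0(1))
  then show ?case
    by simp
next
  case (Suc k)
  then have "Vc \<noteq> {}" "wt eps n (n - card Vc + 1) > 0"
    using wt_rev_pos[of eps "card Vc" n] by auto
  from Suc.prems(4) obtain v \<sigma>' where
    v: "v \<in> set_pmf (pick (wt eps n (n - card Vc + 1)) Vc Ec)" and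
    \<sigma>': "\<sigma>' \<in> set_pmf (perm_pmf eps n k (Vc - {v}) {e\<in>Ec. v \<notin> e})" and
    \<sigma>: "\<sigma> = v # \<sigma>'"
    by (auto simp flip: Suc.hyps(2))
  have "v \<in> Vc"
    using v set_pmf_pick[OF Suc.prems(1) \<open>Vc \<noteq> {}\<close>] \<open>wt eps n _ > 0\<close> by auto
  then have "k = card (Vc - {v})"
    using Suc by simp
  then have "distinct \<sigma>' \<and> set \<sigma>' = Vc - {v}"
    using Suc \<sigma>' by (intro Suc.hyps(1)) auto
  then show ?case
    using \<sigma> \<open>v \<in> Vc\<close> by auto
qed

lemma finite_set_pmf_perm_pmf:
  assumes "finite Vc" "card Vc \<le> n" "eps > 0"
  shows "finite (set_pmf (perm_pmf eps n (card Vc) Vc Ec))"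
proof (rule finite_subset)
  show "set_pmf (perm_pmf eps n (card Vc) Vc Ec) \<subseteq> {xs. set xs \<subseteq> Vc \<and> length xs = card Vc}"
    using perm_pmf_permutes[OF assms] distinct_card by fastforce
  show "finite {xs. set xs \<subseteq> Vc \<and> length xs = card Vc}"
    using finite_lists_length_eq[OF assms(1)] by simp
qed

lemma pos_Cons:
  assumes "x \<in> set (v # \<sigma>)"
  shows "pos (v # \<sigma>) x = (if x = v then 0 else Suc (pos \<sigma> x))"
proof (cases "x = v")
  case True
  have "pos (v # \<sigma>) v = 0"
    unfolding pos_def by (rule Least_eq_0) simp
  with True show ?thesis
    by simp
next
  case False
  then obtain i where "i < length \<sigma>" "\<sigma> ! i = x"
    using assms by (auto simp: in_set_conv_nth)
  then have "(LEAST i. i < length (v # \<sigma>) \<and> (v # \<sigma>) ! i = x) =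
               Suc (LEAST i. Suc i < length (v # \<sigma>) \<and> (v # \<sigma>) ! Suc i = x)"
    using False by (intro Least_Suc[of _ "Suc i"]) auto
  then show ?thesis
    using False unfolding pos_def by simp
qed

lemma mem_cover_of_perm_Cons:
  assumes "v \<notin> set \<sigma>" and "\<forall>e\<in>Ec. e \<subseteq> set (v # \<sigma>)" and "x \<noteq> v"
  shows "x \<in> cover_of_perm Ec (v # \<sigma>) \<longleftrightarrow> x \<in> cover_of_perm {e\<in>Ec. v \<notin> e} \<sigma>"
proof -
  have pos_other: "pos (v # \<sigma>) y = Suc (pos \<sigma> y)" if "y \<in> set \<sigma>" for y
    using pos_Cons[of y v \<sigma>] that assms(1) by auto
  show ?thesis
  proof
    assume "x \<in> cover_of_perm Ec (v # \<sigma>)"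
    then obtain e where e: "e \<in> Ec" "x \<in> e" "\<forall>y\<in>e. pos (v # \<sigma>) x \<le> pos (v # \<sigma>) y"
      unfolding cover_of_perm_def by auto
    have in_\<sigma>: "y \<in> set \<sigma>" if "y \<in> e" "y \<noteq> v" for y
      using that e(1) assms(2) by auto
    have "x \<in> set \<sigma>"
      using in_\<sigma> e(2) \<open>x \<noteq> v\<close> .
    have "v \<notin> e"
    proof
      assume "v \<in> e"
      then have "pos (v # \<sigma>) x \<le> 0"
        using e(3) pos_Cons[of v v \<sigma>] by fastforce
      then show False
        using pos_other[OF \<open>x \<in> set \<sigma>\<close>] by simp
    qed
    have "pos \<sigma> x \<le> pos \<sigma> y" if "y \<in> e" for y
    proof -
      have "y \<in> set \<sigma>"
        using in_\<sigma> that \<open>v \<notin> e\<close> by blast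
      then show ?thesis
        using e(3) that pos_other[OF \<open>x \<in> set \<sigma>\<close>] pos_other[of y] by fastforce
    qed
    then show "x \<in> cover_of_perm {e\<in>Ec. v \<notin> e} \<sigma>"
      using e(1,2) \<open>v \<notin> e\<close> unfolding cover_of_perm_def by blast
  next
    assume "x \<in> cover_of_perm {e\<in>Ec. v \<notin> e} \<sigma>"
    then obtain e where e: "e \<in> Ec" "v \<notin> e" "x \<in> e" "\<forall>y\<in>e. pos \<sigma> x \<le> pos \<sigma> y"
      unfolding cover_of_perm_def by auto
    then have "e \<subseteq> set \<sigma>"
      using assms(2) by auto
    then have "pos (v # \<sigma>) x \<le> pos (v # \<sigma>) y" if "y \<in> e" for y
      using e(3,4) that pos_other[of x] pos_other[of y] by (simp add: subset_iff)
    then show "x \<in> cover_of_perm Ec (v # \<sigma>)"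
      using e(1,3) unfolding cover_of_perm_def by blast
  qed
qed

lemma cover_of_perm_Cons:
  assumes "v \<notin> set \<sigma>" and "\<forall>e\<in>Ec. e \<subseteq> set (v # \<sigma>)"
  shows "cover_of_perm Ec (v # \<sigma>) =
           (if \<exists>e\<in>Ec. v \<in> e then {v} else {}) \<union> cover_of_perm {e\<in>Ec. v \<notin> e} \<sigma>"
proof (rule set_eqI)
  fix x
  have "v \<in> cover_of_perm Ec (v # \<sigma>) \<longleftrightarrow> (\<exists>e\<in>Ec. v \<in> e)"
    using pos_Cons[of v v \<sigma>] unfolding cover_of_perm_def by auto
  moreover have "v \<notin> cover_of_perm {e\<in>Ec. v \<notin> e} \<sigma>"
    unfolding cover_of_perm_def by auto
  ultimately show "x \<in> cover_of_perm Ec (v # \<sigma>) \<longleftrightarrow>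
            x \<in> (if \<exists>e\<in>Ec. v \<in> e then {v} else {}) \<union> cover_of_perm {e\<in>Ec. v \<notin> e} \<sigma>"
    using mem_cover_of_perm_Cons[OF assms, of x] by (cases "x = v") auto
qed

lemma deg_pos_iff: "finite Ec \<Longrightarrow> deg Ec v > 0 \<longleftrightarrow> (\<exists>e\<in>Ec. v \<in> e)"
  unfolding deg_def by (auto simp: card_gt_0_iff)

lemma card_cover_of_perm_Cons:
  assumes "distinct (v # \<sigma>)" "\<forall>e\<in>Ec. e \<subseteq> set (v # \<sigma>)" "finite Ec"
  shows "real (card (cover_of_perm Ec (v # \<sigma>))) =
           (if deg Ec v > 0 then 1 else 0) + real (card (cover_of_perm {e\<in>Ec. v \<notin> e} \<sigma>))"
proof -
  have "cover_of_perm {e\<in>Ec. v \<notin> e} \<sigma> \<subseteq> set \<sigma>"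
    using assms(2) unfolding cover_of_perm_def by auto
  then have "finite (cover_of_perm {e\<in>Ec. v \<notin> e} \<sigma>)" "v \<notin> cover_of_perm {e\<in>Ec. v \<notin> e} \<sigma>"
    using assms(1) finite_subset by auto
  then show ?thesis
    using cover_of_perm_Cons[of v \<sigma> Ec] assms deg_pos_iff[OF assms(3), of v] by auto
qed

definition expected_cover :: "real \<Rightarrow> nat \<Rightarrow> 'a set \<Rightarrow> 'a set set \<Rightarrow> real" where
  "expected_cover eps n Vc Ec = measure_pmf.expectation (perm_pmf eps n (card Vc) Vc Ec)
      (\<lambda>\<sigma>. real (card (cover_of_perm Ec \<sigma>)))"

lemma expected_cover_le_card:
  assumes "simple_graph Vc Ec" "card Vc \<le> n" "eps > 0"
  shows "expected_cover eps n Vc Ec \<le> real (card Vc)"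
  unfolding expected_cover_def
proof (rule measure_pmf.integral_le_const)
  have "finite Vc"
    using assms(1) by (simp add: simple_graph_def)
  then show "integrable (perm_pmf eps n (card Vc) Vc Ec) (\<lambda>\<sigma>. real (card (cover_of_perm Ec \<sigma>)))"
    using assms by (intro integrable_measure_pmf_finite finite_set_pmf_perm_pmf)
  have "cover_of_perm Ec \<sigma> \<subseteq> Vc" for \<sigma>
    using assms(1) unfolding cover_of_perm_def simple_graph_def by auto
  then show "AE \<sigma> in perm_pmf eps n (card Vc) Vc Ec. real (card (cover_of_perm Ec \<sigma>)) \<le> real (card Vc)"
    using \<open>finite Vc\<close> by (simp add: card_mono)
qed

lemma expected_cover_first_step:
  assumes g: "simple_graph Vc Ec" and "card Vc \<le> n" "eps > 0" "v \<in> Vc"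
  shows "measure_pmf.expectation (perm_pmf eps n (card Vc - 1) (Vc - {v}) {e\<in>Ec. v \<notin> e})
             (\<lambda>\<sigma>. real (card (cover_of_perm Ec (v # \<sigma>))))
         = (if deg Ec v > 0 then 1 else 0) + expected_cover eps n (Vc - {v}) {e\<in>Ec. v \<notin> e}"
proof -
  have fin: "finite Vc"
    using g by (simp add: simple_graph_def)
  define M where "M = perm_pmf eps n (card (Vc - {v})) (Vc - {v}) {e\<in>Ec. v \<notin> e}"
  have M_eq: "perm_pmf eps n (card Vc - 1) (Vc - {v}) {e\<in>Ec. v \<notin> e} = M"
    unfolding M_def using fin assms(4) by simp
  have card_le: "card (Vc - {v}) \<le> n"
    using assms(2) card_Diff1_le[of Vc v] by linarith
  have "finite (set_pmf M)"
    unfolding M_def using fin card_le assms(3) by (intro finite_set_pmf_perm_pmf) auto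
  have "real (card (cover_of_perm Ec (v # \<sigma>))) =
          (if deg Ec v > 0 then 1 else 0) + real (card (cover_of_perm {e\<in>Ec. v \<notin> e} \<sigma>))"
    if "\<sigma> \<in> set_pmf M" for \<sigma>
  proof -
    have "distinct \<sigma> \<and> set \<sigma> = Vc - {v}"
      using that fin card_le assms(3) unfolding M_def by (intro perm_pmf_permutes) auto
    then show ?thesis
      using assms(4) g simple_graph_finite_edges[OF g]
      by (intro card_cover_of_perm_Cons) (auto simp: simple_graph_def)
  qed
  then have "measure_pmf.expectation M (\<lambda>\<sigma>. real (card (cover_of_perm Ec (v # \<sigma>)))) =
      measure_pmf.expectation M (\<lambda>\<sigma>. (if deg Ec v > 0 then 1 else 0) +
                                       real (card (cover_of_perm {e\<in>Ec. v \<notin> e} \<sigma>)))"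
    by (intro integral_cong_AE) (simp_all add: AE_measure_pmf_iff)
  also have "\<dots> = (if deg Ec v > 0 then 1 else 0) + expected_cover eps n (Vc - {v}) {e\<in>Ec. v \<notin> e}"
    unfolding expected_cover_def M_def[symmetric] using \<open>finite (set_pmf M)\<close>
    by (subst Bochner_Integration.integral_add) (auto intro: integrable_measure_pmf_finite)
  finally show ?thesis
    unfolding M_eq .
qed

lemma expected_cover_step:
  assumes g: "simple_graph Vc Ec" and "Vc \<noteq> {}" "card Vc \<le> n" "eps > 0"
  defines "w \<equiv> wt eps n (n - card Vc + 1)"
  shows "expected_cover eps n Vc Ec =
           (\<Sum>v\<in>Vc. (real (deg Ec v) + w) / (\<Sum>u\<in>Vc. real (deg Ec u) + w) *
              ((if deg Ec v > 0 then 1 else 0) + expected_cover eps n (Vc - {v}) {e\<in>Ec. v \<notin> e}))"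
proof -
  define M where "M = (\<lambda>v. perm_pmf eps n (card Vc - 1) (Vc - {v}) {e\<in>Ec. v \<notin> e})"
  define f where "f = (\<lambda>\<sigma>. real (card (cover_of_perm Ec \<sigma>)))"
  have fin: "finite Vc"
    using g by (simp add: simple_graph_def)
  then obtain k where k: "card Vc = Suc k"
    using assms(2) by (metis card_0_eq not0_implies_Suc)
  have "w > 0"
    unfolding w_def using wt_rev_pos[of eps "card Vc" n] assms k by simp
  have "finite (set_pmf (M v))" if "v \<in> Vc" for v
  proof -
    have "card (Vc - {v}) = card Vc - 1" "card (Vc - {v}) \<le> n"
      using that fin assms(3) by auto
    then show ?thesis
      unfolding M_def using fin assms(4) finite_set_pmf_perm_pmf[of "Vc - {v}" n eps] by simp
  qed
  have "expected_cover eps n Vc Ec =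
          measure_pmf.expectation (bind_pmf (pick w Vc Ec) (\<lambda>v. map_pmf ((#) v) (M v))) f"
    unfolding expected_cover_def w_def M_def f_def by (simp add: k)
  also have "\<dots> = (\<Sum>v\<in>Vc. pmf (pick w Vc Ec) v *\<^sub>R measure_pmf.expectation (map_pmf ((#) v) (M v)) f)"
    using fin set_pmf_pick[OF fin assms(2) \<open>w > 0\<close>] \<open>\<And>v. v \<in> Vc \<Longrightarrow> finite (set_pmf (M v))\<close>
    by (intro pmf_expectation_bind) auto
  also have "\<dots> = (\<Sum>v\<in>Vc. (real (deg Ec v) + w) / (\<Sum>u\<in>Vc. real (deg Ec u) + w) *
      ((if deg Ec v > 0 then 1 else 0) + expected_cover eps n (Vc - {v}) {e\<in>Ec. v \<notin> e}))"
    unfolding M_def f_def using expected_cover_first_step[OF g assms(3,4)] pmf_pick[OF fin assms(2) \<open>w > 0\<close>]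
    by (intro sum.cong) simp_all
  finally show ?thesis .
qed

lemma sum_deg_eq_sum_card_Int:
  assumes "finite Ec" "finite X"
  shows "(\<Sum>v\<in>X. deg Ec v) = (\<Sum>e\<in>Ec. card (X \<inter> e))"
proof -
  have "(\<Sum>v\<in>X. deg Ec v) = (\<Sum>v\<in>X. \<Sum>e\<in>Ec. if v \<in> e then 1 else 0)"
    unfolding deg_def using assms by (simp add: sum.If_cases Int_def)
  also have "\<dots> = (\<Sum>e\<in>Ec. \<Sum>v\<in>X. if v \<in> e then 1 else 0)"
    by (rule sum.swap)
  also have "\<dots> = (\<Sum>e\<in>Ec. card (X \<inter> e))"
    using assms by (simp add: sum.If_cases Int_def)
  finally show ?thesis .
qed

lemma sum_deg_outside_cover_le:
  assumes g: "simple_graph Vc Ec" and cover: "\<forall>e\<in>Ec. e \<inter> C \<noteq> {}"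
  shows "(\<Sum>v\<in>Vc - C. deg Ec v) \<le> (\<Sum>v\<in>Vc \<inter> C. deg Ec v)"
proof -
  have fin: "finite Vc" "finite Ec"
    using g simple_graph_finite_edges by (auto simp: simple_graph_def)
  have "card ((Vc - C) \<inter> e) \<le> card ((Vc \<inter> C) \<inter> e)" if "e \<in> Ec" for e
  proof -
    have "e \<subseteq> Vc" "card e = 2" "e \<inter> C \<noteq> {}"
      using that g cover by (auto simp: simple_graph_def)
    moreover have "finite e"
      using \<open>card e = 2\<close> card.infinite by fastforce
    ultimately have "card (e \<inter> C) \<ge> 1" "card e = card (e \<inter> C) + card (e - C)"
      using card_Int_Diff[of e C] by (auto simp: Suc_le_eq card_gt_0_iff)
    moreover have "(Vc - C) \<inter> e = e - C" "(Vc \<inter> C) \<inter> e = e \<inter> C"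
      using \<open>e \<subseteq> Vc\<close> by auto
    ultimately show ?thesis
      using \<open>card e = 2\<close> by simp
  qed
  then show ?thesis
    using fin by (simp add: sum_deg_eq_sum_card_Int sum_mono)
qed

text \<open>A vertex outside C costs something only if it has an edge, and then d + w \<le> (1 + w) d.\<close>

lemma weighted_degree_cost_le:
  assumes g: "simple_graph Vc Ec" and cover: "\<forall>e\<in>Ec. e \<inter> C \<noteq> {}" and "w \<ge> 0"
  shows "(\<Sum>v\<in>Vc. (real (deg Ec v) + w) * (if deg Ec v > 0 then 1 else 0))
           \<le> (2 + w) * (\<Sum>v\<in>Vc \<inter> C. real (deg Ec v) + w)"
proof -
  define d where "d = (\<lambda>v. real (deg Ec v))"
  define c where "c = (\<lambda>v. if deg Ec v > 0 then 1 else (0::real))"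
  define B where "B = (\<Sum>v\<in>Vc \<inter> C. d v + w)"
  have fin: "finite Vc"
    using g by (simp add: simple_graph_def)
  have "(\<Sum>v\<in>Vc \<inter> C. (d v + w) * c v) \<le> B"
    unfolding B_def c_def using \<open>w \<ge> 0\<close> by (intro sum_mono) (auto simp: d_def)
  moreover have "(d v + w) * c v \<le> (1 + w) * d v" for v
  proof (cases "deg Ec v > 0")
    case True
    then have "w * 1 \<le> w * d v"
      unfolding d_def using \<open>w \<ge> 0\<close> by (intro mult_left_mono) auto
    then show ?thesis
      using True by (simp add: c_def algebra_simps)
  qed (simp add: c_def d_def)
  then have "(\<Sum>v\<in>Vc - C. (d v + w) * c v) \<le> (1 + w) * (\<Sum>v\<in>Vc - C. d v)"
    by (simp add: sum_distrib_left sum_mono)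
  moreover have "(\<Sum>v\<in>Vc - C. d v) \<le> (\<Sum>v\<in>Vc \<inter> C. d v)"
    unfolding d_def using sum_deg_outside_cover_le[OF g cover] by (simp flip: of_nat_sum)
  moreover have "(\<Sum>v\<in>Vc \<inter> C. d v) \<le> B"
    unfolding B_def using \<open>w \<ge> 0\<close> by (intro sum_mono) auto
  moreover have "(\<Sum>v\<in>Vc. (d v + w) * c v) = (\<Sum>v\<in>Vc \<inter> C. (d v + w) * c v) + (\<Sum>v\<in>Vc - C. (d v + w) * c v)"
    using fin by (metis sum.Int_Diff)
  ultimately have "(\<Sum>v\<in>Vc. (d v + w) * c v) \<le> B + (1 + w) * B"
    using mult_left_mono[of "\<Sum>v\<in>Vc - C. d v" "\<Sum>v\<in>Vc \<inter> C. d v" "1 + w"]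
      mult_left_mono[of "\<Sum>v\<in>Vc \<inter> C. d v" B "1 + w"] \<open>w \<ge> 0\<close> by linarith
  then show ?thesis
    by (simp add: d_def c_def B_def algebra_simps)
qed

lemma cover_weight_ge_average:
  assumes g: "simple_graph Vc Ec" and cover: "\<forall>e\<in>Ec. e \<inter> C \<noteq> {}"
    and "2 * card (Vc \<inter> C) \<le> card Vc"
  shows "real (card (Vc \<inter> C)) * (\<Sum>v\<in>Vc. real (deg Ec v) + w)
           \<le> real (card Vc) * (\<Sum>v\<in>Vc \<inter> C. real (deg Ec v) + w)"
proof -
  define k where "k = real (card (Vc \<inter> C))"
  define N where "N = real (card Vc)"
  define S where "S = (\<Sum>v\<in>Vc. real (deg Ec v))"
  define s where "s = (\<Sum>v\<in>Vc \<inter> C. real (deg Ec v))"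
  have fin: "finite Vc"
    using g by (simp add: simple_graph_def)
  have "S = s + (\<Sum>v\<in>Vc - C. real (deg Ec v))"
    unfolding S_def s_def using fin by (metis sum.Int_Diff)
  then have "S \<le> 2 * s"
    unfolding s_def using sum_deg_outside_cover_le[OF g cover] by (simp flip: of_nat_sum)
  moreover have "2 * k \<le> N" "0 \<le> k" "0 \<le> s"
    using assms(3) by (simp_all add: k_def N_def s_def sum_nonneg flip: of_nat_mult)
  ultimately have "k * S \<le> N * s"
    using mult_left_mono[of S "2 * s" k] mult_right_mono[of "2 * k" N s] by simp
  moreover have "(\<Sum>v\<in>Vc. real (deg Ec v) + w) = S + N * w"
    "(\<Sum>v\<in>Vc \<inter> C. real (deg Ec v) + w) = s + k * w"
    by (simp_all add: S_def s_def N_def k_def sum.distrib)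
  ultimately show ?thesis
    by (simp add: k_def N_def algebra_simps)
qed

definition cover_ratio :: "real \<Rightarrow> nat \<Rightarrow> nat \<Rightarrow> real" where
  "cover_ratio eps n N = 2 + (\<Sum>j=1..N. wt eps n (n - j + 1)) / real N"

lemma cover_ratio_ge_two: "eps > 0 \<Longrightarrow> cover_ratio eps n N \<ge> 2"
  unfolding cover_ratio_def by (simp add: sum_nonneg wt_nonneg)

lemma cover_ratio_mult: "real N * cover_ratio eps n N = 2 * real N + (\<Sum>j=1..N. wt eps n (n - j + 1))"
  by (cases "N = 0") (simp_all add: cover_ratio_def algebra_simps)

lemma cover_ratio_Suc:
  "real (Suc N) * cover_ratio eps n (Suc N) = real N * cover_ratio eps n N + 2 + wt eps n (n - Suc N + 1)"
  unfolding cover_ratio_mult by simp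

lemma cover_ratio_ge_weight:
  assumes "eps > 0" "1 \<le> N" "Suc N \<le> n"
  shows "2 + wt eps n (n - Suc N + 1) \<le> cover_ratio eps n N"
proof -
  have "real N * wt eps n (n - Suc N + 1) \<le> (\<Sum>j=1..N. wt eps n (n - j + 1))"
    using sum_mono[of "{1..N}" "\<lambda>_. wt eps n (n - Suc N + 1)" "\<lambda>j. wt eps n (n - j + 1)"]
      wt_rev_antimono[OF assms(1), of _ "Suc N" n] assms(3) by simp
  then show ?thesis
    using assms(2) by (simp add: cover_ratio_def field_simps)
qed

text \<open>Applied with A the expected cost of one step times the total weight D, B the weight of the
  cover vertices, H = r(N - 1) and h = r(N).\<close>

lemma cover_ratio_step_inequality:
  fixes A B D H h N k w :: real
  assumes "N * h = (N - 1) * H + 2 + w" "2 + w \<le> H" "A \<le> (2 + w) * B" "k * D \<le> N * B" "0 < N"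
  shows "A + H * (k * D - B) \<le> k * h * D"
proof -
  have "N * (A + H * (k * D - B)) \<le> N * H * k * D - (H - 2 - w) * (N * B)"
    using mult_left_mono[OF assms(3), of N] assms(5) by (simp add: algebra_simps)
  also have "\<dots> \<le> N * H * k * D - (H - 2 - w) * (k * D)"
    using mult_left_mono[OF assms(4), of "H - 2 - w"] assms(2) by simp
  also have "\<dots> = k * D * ((N - 1) * H + 2 + w)"
    by (simp add: algebra_simps)
  also have "\<dots> = N * (k * h * D)"
    unfolding assms(1)[symmetric] by (simp add: algebra_simps)
  finally show ?thesis
    using assms(5) by simp
qed

lemma expected_cover_no_edges: "expected_cover eps n Vc {} = 0"
  by (simp add: expected_cover_def cover_of_perm_def)

lemma sum_mult_card_remove_Int:
  fixes f :: "'a \<Rightarrow> real"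
  assumes "finite A"
  shows "(\<Sum>v\<in>A. f v * real (card ((A - {v}) \<inter> C))) = real (card (A \<inter> C)) * sum f A - sum f (A \<inter> C)"
proof -
  have card_remove: "real (card ((A - {v}) \<inter> C)) = real (card (A \<inter> C)) - (if v \<in> C then 1 else 0)"
    if "v \<in> A" for v
  proof -
    have "(A - {v}) \<inter> C = A \<inter> C - {v}" "finite (A \<inter> C)"
      using assms by auto
    moreover have "card (A \<inter> C) > 0" if "v \<in> C"
      using \<open>finite (A \<inter> C)\<close> \<open>v \<in> A\<close> that card_gt_0_iff by blast
    ultimately show ?thesis
      using \<open>v \<in> A\<close> by (auto simp: of_nat_diff Suc_le_eq)
  qed
  have "(\<Sum>v\<in>A. f v * real (card ((A - {v}) \<inter> C)))
          = (\<Sum>v\<in>A. real (card (A \<inter> C)) * f v - (if v \<in> C then f v else 0))"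
    by (intro sum.cong) (simp_all add: card_remove algebra_simps)
  also have "\<dots> = real (card (A \<inter> C)) * sum f A - sum f (A \<inter> C)"
    using assms by (simp add: sum_subtractf sum_distrib_left sum.inter_restrict)
  finally show ?thesis .
qed

lemma expected_cover_step_le:
  assumes g: "simple_graph Vc Ec" and cover: "\<forall>e\<in>Ec. e \<inter> C \<noteq> {}"
    and card_Vc: "card Vc = Suc N" and "Suc N \<le> n" and eps: "eps > 0"
    and k_pos: "0 < card (Vc \<inter> C)" and small: "2 * card (Vc \<inter> C) \<le> card Vc"
    and IH: "\<And>v. v \<in> Vc \<Longrightarrow> expected_cover eps n (Vc - {v}) {e\<in>Ec. v \<notin> e}
                            \<le> real (card ((Vc - {v}) \<inter> C)) * cover_ratio eps n N"
  shows "expected_cover eps n Vc Ec \<le> real (card (Vc \<inter> C)) * cover_ratio eps n (Suc N)"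
proof -
  define w where "w = wt eps n (n - card Vc + 1)"
  define d where "d = (\<lambda>v. real (deg Ec v))"
  define c where "c = (\<lambda>v. if deg Ec v > 0 then 1 else (0::real))"
  define H where "H = cover_ratio eps n N"
  define k where "k = real (card (Vc \<inter> C))"
  define D where "D = (\<Sum>v\<in>Vc. d v + w)"
  define B where "B = (\<Sum>v\<in>Vc \<inter> C. d v + w)"
  define A where "A = (\<Sum>v\<in>Vc. (d v + w) * c v)"
  have fin: "finite Vc" and "Vc \<noteq> {}" and "card Vc \<le> n"
    using g card_Vc \<open>Suc N \<le> n\<close> by (auto simp: simple_graph_def)
  have "1 \<le> N"
    using k_pos small card_Vc by linarith
  have "w > 0"
    unfolding w_def using wt_rev_pos[OF eps] card_Vc \<open>Suc N \<le> n\<close> by simp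
  have "D > 0"
    unfolding D_def d_def using fin \<open>Vc \<noteq> {}\<close> \<open>w > 0\<close> by (intro sum_pos) (auto intro: add_nonneg_pos)
  have weighted_remove: "(\<Sum>v\<in>Vc. (d v + w) * real (card ((Vc - {v}) \<inter> C))) = k * D - B"
    unfolding k_def D_def B_def using sum_mult_card_remove_Int[OF fin] .
  have "expected_cover eps n Vc Ec
          = (\<Sum>v\<in>Vc. (d v + w) / D * (c v + expected_cover eps n (Vc - {v}) {e\<in>Ec. v \<notin> e}))"
    unfolding expected_cover_step[OF g \<open>Vc \<noteq> {}\<close> \<open>card Vc \<le> n\<close> eps] w_def d_def D_def c_def ..
  also have "\<dots> \<le> (\<Sum>v\<in>Vc. (d v + w) / D * (c v + real (card ((Vc - {v}) \<inter> C)) * H))"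
    using IH \<open>D > 0\<close> \<open>w > 0\<close>
    by (intro sum_mono mult_left_mono add_left_mono) (simp_all add: H_def d_def)
  also have "\<dots> = (\<Sum>v\<in>Vc. ((d v + w) * c v + H * ((d v + w) * real (card ((Vc - {v}) \<inter> C)))) / D)"
    by (intro sum.cong) (simp_all add: add_divide_distrib algebra_simps)
  also have "\<dots> = (A + H * (k * D - B)) / D"
    by (simp add: A_def sum.distrib weighted_remove flip: sum_divide_distrib sum_distrib_left)
  also have "\<dots> \<le> k * cover_ratio eps n (Suc N)"
  proof -
    have "A \<le> (2 + w) * B"
      unfolding A_def B_def d_def c_def using weighted_degree_cost_le[OF g cover] \<open>w > 0\<close> by simp
    moreover have "k * D \<le> real (Suc N) * B"
      unfolding k_def D_def B_def d_def using cover_weight_ge_average[OF g cover small] card_Vc by simp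
    moreover have "real (Suc N) * cover_ratio eps n (Suc N) = (real (Suc N) - 1) * H + 2 + w"
      using cover_ratio_Suc[of N eps n] unfolding H_def w_def card_Vc by simp
    moreover have "2 + w \<le> H"
      unfolding H_def w_def card_Vc using cover_ratio_ge_weight[OF eps \<open>1 \<le> N\<close> \<open>Suc N \<le> n\<close>] .
    ultimately have "A + H * (k * D - B) \<le> k * cover_ratio eps n (Suc N) * D"
      by (intro cover_ratio_step_inequality) auto
    then show ?thesis
      using \<open>D > 0\<close> by (simp add: divide_le_eq)
  qed
  finally show ?thesis
    unfolding k_def .
qed

lemma card_Int_cover_pos:
  assumes "simple_graph V E" "\<forall>e\<in>E. e \<inter> C \<noteq> {}" "E \<noteq> {}"
  shows "0 < card (V \<inter> C)"
proof -
  obtain e where "e \<in> E"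
    using assms(3) by blast
  then have "e \<subseteq> V" "e \<inter> C \<noteq> {}"
    using assms(1,2) by (auto simp: simple_graph_def)
  then have "V \<inter> C \<noteq> {}"
    by blast
  then show ?thesis
    using assms(1) by (simp add: simple_graph_def card_gt_0_iff)
qed

lemma expected_cover_le_cover_ratio:
  assumes "simple_graph Vc Ec" "\<forall>e\<in>Ec. e \<inter> C \<noteq> {}" "card Vc \<le> n" "eps > 0"
  shows "expected_cover eps n Vc Ec \<le> real (card (Vc \<inter> C)) * cover_ratio eps n (card Vc)"
  using assms
proof (induction "card Vc" arbitrary: Vc Ec)
  case 0
  then have "Vc = {}"
    by (simp add: simple_graph_def)
  then show ?case
    using 0 expected_cover_le_card[of Vc Ec n eps] by simp
next
  case (Suc N)
  note g = Suc.prems(1) and cover = Suc.prems(2)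
  have ratio_ge_two: "2 \<le> cover_ratio eps n (Suc N)"
    using cover_ratio_ge_two[OF Suc.prems(4)] .
  consider "card Vc \<le> 2 * card (Vc \<inter> C)" | "Ec = {}"
    | "2 * card (Vc \<inter> C) \<le> card Vc" "0 < card (Vc \<inter> C)"
    using card_Int_cover_pos[OF g cover] by linarith
  then show ?case
  proof cases
    case 1
    have "expected_cover eps n Vc Ec \<le> 2 * real (card (Vc \<inter> C))"
      using expected_cover_le_card[OF g Suc.prems(3,4)] 1 by linarith
    also have "\<dots> \<le> real (card (Vc \<inter> C)) * cover_ratio eps n (card Vc)"
      using mult_right_mono[OF ratio_ge_two, of "real (card (Vc \<inter> C))"] Suc.hyps(2)
      by (simp add: mult.commute)
    finally show ?thesis .
  next
    case 2
    then show ?thesis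
      using ratio_ge_two Suc.hyps(2) by (simp add: expected_cover_no_edges)
  next
    case 3
    have "expected_cover eps n (Vc - {v}) {e\<in>Ec. v \<notin> e}
            \<le> real (card ((Vc - {v}) \<inter> C)) * cover_ratio eps n N" if "v \<in> Vc" for v
    proof -
      have card_Diff: "N = card (Vc - {v})"
        using that Suc.hyps(2) g by (simp add: simple_graph_def)
      moreover have "\<forall>e\<in>{e\<in>Ec. v \<notin> e}. e \<inter> C \<noteq> {}"
        using cover by simp
      moreover have "card (Vc - {v}) \<le> n"
        using card_Diff Suc.hyps(2) Suc.prems(3) by linarith
      ultimately show ?thesis
        using Suc.hyps(1)[OF card_Diff simple_graph_remove_vertex[OF g] _ _ Suc.prems(4)]
        by (simp flip: card_Diff)
    qed
    moreover have "Suc N \<le> n"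
      using Suc.hyps(2) Suc.prems(3) by simp
    ultimately show ?thesis
      using expected_cover_step_le[OF g cover Suc.hyps(2)[symmetric] _ Suc.prems(4) 3(2,1)]
        Suc.hyps(2) by simp
  qed
qed

lemma sum_inverse_sqrt_le: "(\<Sum>j=1..m. 1 / sqrt (real j)) \<le> 2 * sqrt (real m)"
proof (induction m)
  case (Suc m)
  define a where "a = sqrt (real m)"
  define b where "b = sqrt (real (Suc m))"
  have "0 \<le> a" "a \<le> b" "0 < b" "b * b - a * a = 1"
    unfolding a_def b_def by simp_all
  then have "2 * (b - a) * b - 1 = (b - a)\<^sup>2"
    by (simp add: algebra_simps power2_eq_square)
  then have "1 \<le> 2 * (b - a) * b"
    by (metis diff_ge_0_iff_ge zero_le_power2)
  then have "1 / b \<le> 2 * (b - a)"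
    using \<open>0 < b\<close> by (simp add: divide_le_eq)
  then show ?case
    using Suc.IH by (simp add: a_def b_def)
qed simp

lemma sum_wt_rev: "(\<Sum>i=1..n. wt eps n i) = (\<Sum>j=1..n. wt eps n (n - j + 1))"
proof -
  have "(\<Sum>i=1..n. wt eps n i) = (\<Sum>j=1..n. wt eps n (n + 1 - j))"
    by (rule sum.atLeastAtMost_rev)
  also have "\<dots> = (\<Sum>j=1..n. wt eps n (n - j + 1))"
    by (intro sum.cong) (auto simp: Suc_diff_le)
  finally show ?thesis .
qed

lemma sum_wt_le:
  assumes "eps > 0"
  shows "(\<Sum>i=1..n. wt eps n i) \<le> 8 / eps * real n"
proof -
  have "(\<Sum>i=1..n. wt eps n i) = 4 / eps * sqrt (real n) * (\<Sum>j=1..n. 1 / sqrt (real j))"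
    unfolding sum_wt_rev sum_distrib_left
    by (intro sum.cong) (auto simp: wt_def real_sqrt_divide Suc_diff_le)
  also have "\<dots> \<le> 4 / eps * sqrt (real n) * (2 * sqrt (real n))"
    using assms sum_inverse_sqrt_le[of n] by (intro mult_left_mono) auto
  finally show ?thesis
    by simp
qed

lemma cover_ratio_card: "cover_ratio eps n n = 2 + (1 / real n) * (\<Sum>i=1..n. wt eps n i)"
  unfolding cover_ratio_def sum_wt_rev by simp

lemma OPT_attained:
  assumes "simple_graph V E"
  obtains C where "is_vertex_cover V E C" "card C = OPT V E"
proof -
  have "finite V" "\<forall>e\<in>E. e \<subseteq> V \<and> e \<noteq> {}"
    using assms by (auto simp: simple_graph_def)
  then have "is_vertex_cover V E V"
    unfolding is_vertex_cover_def by blast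
  moreover have "{card C | C. is_vertex_cover V E C} \<subseteq> card ` Pow V"
    unfolding is_vertex_cover_def by blast
  then have "finite {card C | C. is_vertex_cover V E C}"
    using \<open>finite V\<close> finite_subset by blast
  ultimately have "OPT V E \<in> {card C | C. is_vertex_cover V E C}"
    unfolding OPT_def by (intro Min_in) auto
  then show ?thesis
    using that by auto
qed

theorem mainTheorem7:
  fixes V :: "'a set" and E :: "'a set set" and eps :: real
  assumes "simple_graph V E" and "eps > 0"
  defines "n \<equiv> card V"
  shows "ALG_expect eps V E
           \<le> (2 + 2 * (1 / real n) * (\<Sum>i=1..n. wt eps n i)) * real (OPT V E)
       \<and> (2 + 2 * (1 / real n) * (\<Sum>i=1..n. wt eps n i)) * real (OPT V E)
           \<le> (2 + 16 / eps) * real (OPT V E)"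
proof
  obtain C where C: "is_vertex_cover V E C" "card C = OPT V E"
    using OPT_attained[OF assms(1)] .
  then have "V \<inter> C = C" "\<forall>e\<in>E. e \<inter> C \<noteq> {}"
    unfolding is_vertex_cover_def by auto
  define avg where "avg = (1 / real n) * (\<Sum>i=1..n. wt eps n i)"
  have "0 \<le> avg"
    unfolding avg_def using wt_nonneg[OF assms(2)] by (simp add: sum_nonneg)
  have "ALG_expect eps V E = expected_cover eps n V E"
    unfolding ALG_expect_def expected_cover_def alg_perm_def n_def ..
  also have "\<dots> \<le> real (OPT V E) * (2 + avg)"
    using expected_cover_le_cover_ratio[OF assms(1) \<open>\<forall>e\<in>E. e \<inter> C \<noteq> {}\<close> _ assms(2), of n]
    by (simp add: n_def \<open>V \<inter> C = C\<close> C(2) avg_def cover_ratio_card)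
  also have "\<dots> \<le> (2 + 2 * avg) * real (OPT V E)"
    using \<open>0 \<le> avg\<close> by (simp add: mult_left_mono algebra_simps)
  finally show "ALG_expect eps V E \<le> (2 + 2 * (1 / real n) * (\<Sum>i=1..n. wt eps n i)) * real (OPT V E)"
    by (simp add: avg_def)
  have "avg \<le> 8 / eps"
    unfolding avg_def using sum_wt_le[OF assms(2), of n] assms(2) by (cases "n = 0") (auto simp: field_simps)
  then show "(2 + 2 * (1 / real n) * (\<Sum>i=1..n. wt eps n i)) * real (OPT V E) \<le> (2 + 16 / eps) * real (OPT V E)"
    by (intro mult_right_mono) (auto simp: avg_def)
qed

end
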